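(* Let $M$ be a helix hypersurface in $E^n$ with direction $d$, and let $\alpha: I\subset\mathbb{R}\to M$ be a unit speed (arc-length parametrized) curve on $M$ with Frenet frame $\{V_1(s),\dots,V_n(s)\}$. If $\alpha$ is a geodesic curve on $M$, then $d\in\mathrm{Sp}\{V_2'\}^\perp$ along $\alpha$, i.e. $\langle V_2'(s),d\rangle=0$ for all $s\in I$.
   Context: $\langle\cdot,\cdot\rangle$ is the standard inner product on $E^n=\mathbb{R}^n$. A hypersurface $M\subset\mathbb{R}^n$ with unit normal $N$ is a helix with respect to a fixed unit direction $d$ if the angle between $d$ and $T_qM$ is the same for all $q\in M$, equivalently $\langle d,N\rangle$ is constant on $M$. The Frenet frame of a unit speed curve with nonvanishing curvatures $k_i$ is the orthonormal frame $\{V_1=\alpha',V_2,\dots,V_n\}$ with $V_1'=k_1V_2$, $V_i'=-k_{i-1}V_{i-1}+k_iV_{i+1}$ ($1<i<n$), $V_n'=-k_{n-1}V_{n-1}$. A curve on $M$ is a geodesic if $\alpha''$ is normal to $M$. $\mathrm{Sp}\{v\}^\perp$ is the orthogonal complement of the span of $v$. *)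

theory Defs
  imports "HOL-Analysis.Analysis"
begin

text \<open>Ambient space: E^n = real^'n, with n = CARD('n).\<close>

definition local_defining_fn ::
  "(real^'n) set \<Rightarrow> real^'n \<Rightarrow> (real^'n) set \<Rightarrow> (real^'n \<Rightarrow> real) \<Rightarrow> (real^'n \<Rightarrow> real^'n) \<Rightarrow> bool" where
  "local_defining_fn M q U f g \<longleftrightarrow>
     open U \<and> q \<in> U \<and>
     (\<forall>x\<in>U. (f has_derivative (\<lambda>v. g x \<bullet> v)) (at x)) \<and>
     continuous_on U g \<and> (\<forall>x\<in>U. g x \<noteq> 0) \<and>
     M \<inter> U = {x\<in>U. f x = 0}"

definition hypersurface :: "(real^'n) set \<Rightarrow> bool" where
  "hypersurface M \<longleftrightarrow> (\<forall>q\<in>M. \<exists>U f g. local_defining_fn M q U f g)"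

definition tangent_space :: "(real^'n) set \<Rightarrow> real^'n \<Rightarrow> (real^'n) set" where
  "tangent_space M q = {v. \<exists>U f g. local_defining_fn M q U f g \<and> g q \<bullet> v = 0}"

definition unit_normal :: "(real^'n) set \<Rightarrow> (real^'n \<Rightarrow> real^'n) \<Rightarrow> bool" where
  "unit_normal M N \<longleftrightarrow> hypersurface M \<and> continuous_on M N \<and>
     (\<forall>q\<in>M. norm (N q) = 1 \<and> (\<forall>v\<in>tangent_space M q. N q \<bullet> v = 0))"

definition helix_hypersurface ::
  "(real^'n) set \<Rightarrow> (real^'n \<Rightarrow> real^'n) \<Rightarrow> real^'n \<Rightarrow> bool" where
  "helix_hypersurface M N d \<longleftrightarrow> unit_normal M N \<and> norm d = 1 \<and>
     (\<exists>c. \<forall>q\<in>M. d \<bullet> N q = c)"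

text \<open>Frenet frame {V_1,...,V_n} (n = CARD('n)) with nonvanishing curvatures k_1,...,k_{n-1}
  of the curve alpha on the interval I; V_1 = alpha' (so alpha is unit speed).\<close>
definition frenet_frame ::
  "(real \<Rightarrow> real^'n) \<Rightarrow> real set \<Rightarrow> (nat \<Rightarrow> real \<Rightarrow> real^'n) \<Rightarrow> (nat \<Rightarrow> real \<Rightarrow> real) \<Rightarrow> bool" where
  "frenet_frame \<alpha> I V k \<longleftrightarrow>
     (let n = CARD('n) in
      (\<forall>s\<in>I. \<forall>i\<in>{1..n}. \<forall>j\<in>{1..n}. V i s \<bullet> V j s = (if i = j then 1 else 0)) \<and>
      (\<forall>s\<in>I. \<forall>i\<in>{1..<n}. k i s \<noteq> 0) \<and>
      (\<forall>s\<in>I. (\<alpha> has_vector_derivative V 1 s) (at s)) \<and>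
      (\<forall>s\<in>I. (V 1 has_vector_derivative k 1 s *\<^sub>R V 2 s) (at s)) \<and>
      (\<forall>s\<in>I. \<forall>i. 1 < i \<and> i < n \<longrightarrow>
          (V i has_vector_derivative (- k (i - 1) s *\<^sub>R V (i - 1) s + k i s *\<^sub>R V (i + 1) s)) (at s)) \<and>
      (\<forall>s\<in>I. (V n has_vector_derivative (- k (n - 1) s *\<^sub>R V (n - 1) s)) (at s)))"

definition geodesic_on :: "(real^'n) set \<Rightarrow> (real \<Rightarrow> real^'n) \<Rightarrow> real set \<Rightarrow> bool" where
  "geodesic_on M \<alpha> I \<longleftrightarrow> \<alpha> ` I \<subseteq> M \<and>
     (\<forall>s\<in>I. \<forall>v\<in>tangent_space M (\<alpha> s).
        vector_derivative (\<lambda>t. vector_derivative \<alpha> (at t)) (at s) \<bullet> v = 0)"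

end

theory Submission
  imports Defs
begin

text \<open>A geodesic has its acceleration \<open>k\<^sub>1 V\<^sub>2\<close> normal to \<open>M\<close>, so the principal normal \<open>V\<^sub>2\<close>
  agrees with \<open>\<plusminus>N\<close> along \<open>\<alpha>\<close>, with a sign that is constant by continuity. Hence
  \<open>\<langle>V\<^sub>2, d\<rangle> = \<plusminus>\<langle>N, d\<rangle>\<close> is constant for a helix, and its derivative \<open>\<langle>V\<^sub>2', d\<rangle>\<close> vanishes.\<close>

lemma orthogonal_to_hyperplane_eq_scaleR:
  fixes g v :: "'a::real_inner"
  assumes "g \<noteq> 0" and "\<And>w. g \<bullet> w = 0 \<Longrightarrow> v \<bullet> w = 0"
  shows "v = ((v \<bullet> g) / (g \<bullet> g)) *\<^sub>R g"
proof -
  define w where "w = v - ((v \<bullet> g) / (g \<bullet> g)) *\<^sub>R g"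
  have "g \<bullet> w = 0"
    unfolding w_def using assms(1) by (simp add: inner_diff_right inner_commute)
  moreover from this have "v \<bullet> w = 0" using assms(2) by blast
  ultimately have "w \<bullet> w = 0" unfolding w_def by (simp add: inner_diff_left)
  thus ?thesis unfolding w_def by simp
qed

lemma unit_vectors_orthogonal_to_hyperplane_parallel:
  fixes g a b :: "'a::real_inner"
  assumes "g \<noteq> 0"
    and "\<And>w. g \<bullet> w = 0 \<Longrightarrow> a \<bullet> w = 0" and "\<And>w. g \<bullet> w = 0 \<Longrightarrow> b \<bullet> w = 0"
    and "norm a = 1" and "norm b = 1"
  shows "a = (a \<bullet> b) *\<^sub>R b \<and> (a \<bullet> b = 1 \<or> a \<bullet> b = -1)"
proof -
  define x y where "x = (a \<bullet> g) / (g \<bullet> g)" and "y = (b \<bullet> g) / (g \<bullet> g)"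
  have a: "a = x *\<^sub>R g" and b: "b = y *\<^sub>R g"
    unfolding x_def y_def using orthogonal_to_hyperplane_eq_scaleR assms(1-3) by blast+
  have "y \<noteq> 0" using b assms(5) by auto
  define r where "r = x / y"
  have ab: "a = r *\<^sub>R b" using a b \<open>y \<noteq> 0\<close> unfolding r_def by simp
  have "a \<bullet> b = r" by (simp add: ab assms(5) flip: norm_eq_1)
  moreover have "\<bar>r\<bar> = 1" using arg_cong[OF ab, of norm] assms(4,5) by simp
  ultimately show ?thesis using ab by auto
qed

lemma vector_derivative_inner_zero_if_inner_constant:
  fixes f :: "real \<Rightarrow> 'a::real_inner"
  assumes "open I" and "s \<in> I" and "f differentiable at s"
    and "\<And>t. t \<in> I \<Longrightarrow> f t \<bullet> d = c"
  shows "vector_derivative f (at s) \<bullet> d = 0"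
proof -
  have "((\<lambda>t. f t \<bullet> d) has_real_derivative vector_derivative f (at s) \<bullet> d) (at s)"
    using bounded_linear.has_vector_derivative[OF bounded_linear_inner_left
        vector_derivative_works[THEN iffD1, OF assms(3)]]
    by (simp add: has_real_derivative_iff_has_vector_derivative)
  moreover have "((\<lambda>t. f t \<bullet> d) has_real_derivative 0) (at s)"
    by (rule has_field_derivative_transform_within_open[of "\<lambda>_. c", OF _ assms(1,2)])
       (simp_all add: assms(4))
  ultimately show ?thesis by (rule DERIV_unique)
qed

lemma continuous_on_sign_constant:
  fixes e :: "real \<Rightarrow> real"
  assumes "is_interval I" and "continuous_on I e" and "\<And>s. s \<in> I \<Longrightarrow> e s = 1 \<or> e s = -1"
  obtains e0 where "\<And>s. s \<in> I \<Longrightarrow> e s = e0"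
proof -
  have "finite (e ` I)" by (rule finite_subset[of _ "{1, -1}"]) (use assms(3) in auto)
  hence "e constant_on I"
    using continuous_finite_range_constant is_interval_connected assms(1,2) by blast
  thus ?thesis using that unfolding constant_on_def by blast
qed

context
  fixes \<alpha> :: "real \<Rightarrow> real^'n" and I :: "real set"
    and V :: "nat \<Rightarrow> real \<Rightarrow> real^'n" and k :: "nat \<Rightarrow> real \<Rightarrow> real"
  assumes frenet: "frenet_frame \<alpha> I V k"
begin

lemma frenet_frame_norm_principal_normal:
  "CARD('n) \<ge> 2 \<Longrightarrow> s \<in> I \<Longrightarrow> norm (V 2 s) = 1"
  using frenet unfolding frenet_frame_def Let_def by (auto simp: norm_eq_1)

lemma frenet_frame_curvature_nonzero: "CARD('n) \<ge> 2 \<Longrightarrow> s \<in> I \<Longrightarrow> k 1 s \<noteq> 0"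
  using frenet unfolding frenet_frame_def Let_def by auto

lemma frenet_frame_tangent_derivative: "s \<in> I \<Longrightarrow> (\<alpha> has_vector_derivative V 1 s) (at s)"
  using frenet unfolding frenet_frame_def Let_def by auto

lemma frenet_frame_principal_normal_differentiable:
  assumes dim: "CARD('n) \<ge> 2" and "s \<in> I" shows "V 2 differentiable at s"
proof (cases "CARD('n) = 2")
  case True
  then show ?thesis
    using frenet assms(2) unfolding frenet_frame_def Let_def
    by (metis differentiable_def has_vector_derivative_def)
next
  case False
  then have "1 < (2::nat)" "2 < CARD('n)" using dim by auto
  then show ?thesis
    using frenet assms(2) unfolding frenet_frame_def Let_def
    by (metis differentiable_def has_vector_derivative_def)
qed

lemma frenet_frame_acceleration:
  assumes "open I" and "s \<in> I"
  shows "vector_derivative (\<lambda>t. vector_derivative \<alpha> (at t)) (at s) = k 1 s *\<^sub>R V 2 s"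
proof -
  have "(V 1 has_vector_derivative k 1 s *\<^sub>R V 2 s) (at s)"
    using frenet assms(2) unfolding frenet_frame_def Let_def by auto
  then have "((\<lambda>t. vector_derivative \<alpha> (at t)) has_vector_derivative k 1 s *\<^sub>R V 2 s) (at s)"
    by (rule has_vector_derivative_transform_within_open[OF _ assms])
       (metis frenet_frame_tangent_derivative vector_derivative_at)
  then show ?thesis by (rule vector_derivative_at)
qed

end

lemma geodesic_principal_normal_parallel_normal:
  fixes M :: "(real^'n) set"
  assumes "CARD('n) \<ge> 2" and "unit_normal M N" and "open I"
    and "frenet_frame \<alpha> I V k" and "geodesic_on M \<alpha> I" and "s \<in> I"
  shows "V 2 s = (V 2 s \<bullet> N (\<alpha> s)) *\<^sub>R N (\<alpha> s) \<and>
         (V 2 s \<bullet> N (\<alpha> s) = 1 \<or> V 2 s \<bullet> N (\<alpha> s) = -1)"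
proof -
  have q: "\<alpha> s \<in> M" using assms(5,6) unfolding geodesic_on_def by auto
  then obtain U f g where L: "local_defining_fn M (\<alpha> s) U f g"
    using assms(2) unfolding unit_normal_def hypersurface_def by blast
  have g: "g (\<alpha> s) \<noteq> 0" using L unfolding local_defining_fn_def by auto
  have tangent: "w \<in> tangent_space M (\<alpha> s)" if "g (\<alpha> s) \<bullet> w = 0" for w
    unfolding tangent_space_def using L that by blast
  have "k 1 s *\<^sub>R V 2 s \<bullet> w = 0" if "g (\<alpha> s) \<bullet> w = 0" for w
    using assms(5,6) tangent[OF that] frenet_frame_acceleration[OF assms(4,3,6)]
    unfolding geodesic_on_def by metis
  then have V2: "V 2 s \<bullet> w = 0" if "g (\<alpha> s) \<bullet> w = 0" for w
    using that frenet_frame_curvature_nonzero[OF assms(4,1,6)] by simp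
  have N: "N (\<alpha> s) \<bullet> w = 0" if "g (\<alpha> s) \<bullet> w = 0" for w
    using assms(2) q tangent[OF that] unfolding unit_normal_def by blast
  show ?thesis
    using unit_vectors_orthogonal_to_hyperplane_parallel[OF g V2 N]
      frenet_frame_norm_principal_normal[OF assms(4,1,6)] assms(2) q
    unfolding unit_normal_def by blast
qed

lemma geodesic_principal_normal_eq_normal:
  fixes M :: "(real^'n) set"
  assumes "CARD('n) \<ge> 2" and "unit_normal M N" and "open I" and "is_interval I"
    and "frenet_frame \<alpha> I V k" and "geodesic_on M \<alpha> I"
  obtains e where "\<And>s. s \<in> I \<Longrightarrow> V 2 s = e *\<^sub>R N (\<alpha> s)"
proof -
  have "continuous_on I (V 2)"
    by (intro continuous_at_imp_continuous_on ballI differentiable_imp_continuous_within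
        frenet_frame_principal_normal_differentiable[OF assms(5,1)])
  moreover have "continuous_on I \<alpha>"
    by (intro continuous_at_imp_continuous_on ballI has_vector_derivative_continuous[OF
        frenet_frame_tangent_derivative[OF assms(5)]])
  moreover have "continuous_on M N" and "\<alpha> ` I \<subseteq> M"
    using assms(2,6) unfolding unit_normal_def geodesic_on_def by auto
  ultimately have "continuous_on I (\<lambda>s. V 2 s \<bullet> N (\<alpha> s))"
    by (metis continuous_on_inner continuous_on_compose2 image_subset_iff_funcset)
  then obtain e where "\<And>s. s \<in> I \<Longrightarrow> V 2 s \<bullet> N (\<alpha> s) = e"
    using continuous_on_sign_constant[OF assms(4)]
      geodesic_principal_normal_parallel_normal[OF assms(1-3,5,6)] by blast
  then show ?thesis
    using that geodesic_principal_normal_parallel_normal[OF assms(1-3,5,6)] by metis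
qed

theorem corollary3p2:
  fixes M :: "(real^'n) set" and N :: "real^'n \<Rightarrow> real^'n" and d :: "real^'n"
    and \<alpha> :: "real \<Rightarrow> real^'n" and I :: "real set"
    and V :: "nat \<Rightarrow> real \<Rightarrow> real^'n" and k :: "nat \<Rightarrow> real \<Rightarrow> real"
  assumes "CARD('n) \<ge> 2"
    and "helix_hypersurface M N d"
    and "open I" and "is_interval I"
    and "\<alpha> ` I \<subseteq> M"
    and "frenet_frame \<alpha> I V k"
    and "geodesic_on M \<alpha> I"
  shows "\<forall>s\<in>I. vector_derivative (V 2) (at s) \<bullet> d = 0"
proof
  fix s assume "s \<in> I"
  have normal: "unit_normal M N" and "\<exists>c. \<forall>q\<in>M. d \<bullet> N q = c"
    using assms(2) unfolding helix_hypersurface_def by auto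
  then obtain c where c: "\<And>q. q \<in> M \<Longrightarrow> N q \<bullet> d = c" by (auto simp: inner_commute)
  obtain e where "\<And>t. t \<in> I \<Longrightarrow> V 2 t = e *\<^sub>R N (\<alpha> t)"
    using geodesic_principal_normal_eq_normal[OF assms(1) normal assms(3,4,6,7)] by blast
  then have "\<And>t. t \<in> I \<Longrightarrow> V 2 t \<bullet> d = e * c"
    using c assms(5) by auto
  then show "vector_derivative (V 2) (at s) \<bullet> d = 0"
    using vector_derivative_inner_zero_if_inner_constant[OF assms(3) \<open>s \<in> I\<close>]
      frenet_frame_principal_normal_differentiable[OF assms(6,1) \<open>s \<in> I\<close>] by blast
qed

end
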